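(* Let $H$ be an infinite dimensional real or complex Hilbert space and let $P,Q$ be projections on $H$ such that for every projection $R$ on $H$ with finite corank we have $RP=PR$ if and only if $RQ=QR$. Then either $P=Q$ or $P=I-Q$.
   Context: A projection means a self-adjoint idempotent bounded operator on $H$. A projection $R$ has finite corank if $I-R$ has finite rank. *)

theory Defs
  imports "HOL-Analysis.Analysis"
begin

text \<open>A real Hilbert space is a type of class real_inner and complete_space.
  Operators on H are functions of type 'a => 'a that are bounded (real-)linear.\<close>

definition is_projection :: "('a::real_inner \<Rightarrow> 'a) \<Rightarrow> bool" where
  "is_projection R \<longleftrightarrow> bounded_linear R \<and> R \<circ> R = R \<and>
     (\<forall>x y. inner (R x) y = inner x (R y))"

definition finite_rank :: "('a::real_vector \<Rightarrow> 'a) \<Rightarrow> bool" where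
  "finite_rank T \<longleftrightarrow> (\<exists>B. finite B \<and> range T \<subseteq> span B)"

definition finite_corank :: "('a::real_vector \<Rightarrow> 'a) \<Rightarrow> bool" where
  "finite_corank R \<longleftrightarrow> finite_rank (\<lambda>x. x - R x)"

definition infinite_dimensional :: "'a::real_vector itself \<Rightarrow> bool" where
  "infinite_dimensional _ \<longleftrightarrow> \<not> (\<exists>B::'a set. finite B \<and> UNIV \<subseteq> span B)"

text \<open>Complex Hilbert spaces: a complex Hilbert space is its underlying real
  Hilbert space together with multiplication by i, an orthogonal real-linear map J
  with J (J x) = - x. Complex scalar multiplication and the complex inner product
  (linear in the first, conjugate-linear in the second argument) are recovered
  from J as follows.\<close>

definition complex_structure :: "('a::real_inner \<Rightarrow> 'a) \<Rightarrow> bool" where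
  "complex_structure J \<longleftrightarrow> bounded_linear J \<and> (\<forall>x. J (J x) = - x) \<and>
     (\<forall>x y. inner (J x) (J y) = inner x y)"

definition cscale :: "('a::real_vector \<Rightarrow> 'a) \<Rightarrow> complex \<Rightarrow> 'a \<Rightarrow> 'a" where
  "cscale J c x = Re c *\<^sub>R x + Im c *\<^sub>R J x"

definition cinner :: "('a::real_inner \<Rightarrow> 'a) \<Rightarrow> 'a \<Rightarrow> 'a \<Rightarrow> complex" where
  "cinner J x y = Complex (inner x y) (inner x (J y))"

definition cspan :: "('a::real_vector \<Rightarrow> 'a) \<Rightarrow> 'a set \<Rightarrow> 'a set" where
  "cspan J B = {\<Sum>b\<in>S. cscale J (c b) b | S c. finite S \<and> S \<subseteq> B}"

definition is_cprojection :: "('a::real_inner \<Rightarrow> 'a) \<Rightarrow> ('a \<Rightarrow> 'a) \<Rightarrow> bool" where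
  "is_cprojection J R \<longleftrightarrow> bounded_linear R \<and>
     (\<forall>c x. R (cscale J c x) = cscale J c (R x)) \<and> R \<circ> R = R \<and>
     (\<forall>x y. cinner J (R x) y = cinner J x (R y))"

definition cfinite_rank :: "('a::real_vector \<Rightarrow> 'a) \<Rightarrow> ('a \<Rightarrow> 'a) \<Rightarrow> bool" where
  "cfinite_rank J T \<longleftrightarrow> (\<exists>B. finite B \<and> range T \<subseteq> cspan J B)"

definition cfinite_corank :: "('a::real_vector \<Rightarrow> 'a) \<Rightarrow> ('a \<Rightarrow> 'a) \<Rightarrow> bool" where
  "cfinite_corank J R \<longleftrightarrow> cfinite_rank J (\<lambda>x. x - R x)"

definition cinfinite_dimensional :: "('a::real_vector \<Rightarrow> 'a) \<Rightarrow> bool" where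
  "cinfinite_dimensional J \<longleftrightarrow> \<not> (\<exists>B. finite B \<and> UNIV \<subseteq> cspan J B)"

end

theory Submission
  imports Defs
begin

(* For any vector v, the projection onto the orthogonal complement of the (real or complex)
   line through v has finite corank, and it commutes with a projection P exactly when
   P v = v or P v = 0. Hence P and Q have the same eigenvectors: range P \<union> ker P =
   range Q \<union> ker Q. A subspace covered by two subspaces lies in one of them, so each of
   range P, ker P lies in range Q or in ker Q and vice versa, which forces P = Q or P = I - Q. *)

lemma subspace_subset_Un_cases:
  assumes "subspace U" "subspace V" "subspace W" "U \<subseteq> V \<union> W"
  shows "U \<subseteq> V \<or> U \<subseteq> W"
proof (rule ccontr)
  assume "\<not> ?thesis"
  then obtain v w where "v \<in> U" "v \<notin> W" "w \<in> U" "w \<notin> V" by blast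
  with assms(4) have "v \<in> V" "w \<in> W" by blast+
  have "v + w \<in> V \<union> W"
    using assms(1,4) \<open>v \<in> U\<close> \<open>w \<in> U\<close> by (blast intro: subspace_add)
  moreover have "v + w \<notin> V"
    using subspace_diff[OF assms(2), of "v + w" v] \<open>v \<in> V\<close> \<open>w \<notin> V\<close> by auto
  moreover have "v + w \<notin> W"
    using subspace_diff[OF assms(3), of "v + w" w] \<open>w \<in> W\<close> \<open>v \<notin> W\<close> by auto
  ultimately show False by blast
qed

lemma subspace_fixpoints:
  assumes "linear f"
  shows "subspace {x. f x = x}"
  using assms unfolding subspace_def by (simp add: linear_0 linear_add linear_scale)

lemma idempotent_eqI:
  fixes P Q :: "'a::real_vector \<Rightarrow> 'a"
  assumes "linear P" "linear Q" "\<And>x. P (P x) = P x"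
    and "\<And>x. P x = x \<Longrightarrow> Q x = x" "\<And>x. P x = 0 \<Longrightarrow> Q x = 0"
  shows "P = Q"
proof
  fix y
  have "P (y - P y) = 0"
    using assms(1,3) by (simp add: linear_diff)
  have "Q y = Q (P y) + Q (y - P y)"
    using assms(2) by (simp add: linear_diff)
  also have "\<dots> = P y"
    using assms(3-5) \<open>P (y - P y) = 0\<close> by simp
  finally show "P y = Q y" by simp
qed

lemma idempotents_eq_or_complement:
  fixes P Q :: "'a::real_vector \<Rightarrow> 'a"
  assumes P: "linear P" "\<And>x. P (P x) = P x" and Q: "linear Q" "\<And>x. Q (Q x) = Q x"
    and same_eigenvectors: "\<And>x. (P x = x \<or> P x = 0) \<longleftrightarrow> (Q x = x \<or> Q x = 0)"
  shows "P = Q \<or> P = (\<lambda>x. x - Q x)"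
proof -
  define fixP kerP fixQ kerQ
    where "fixP = {x. P x = x}" and "kerP = {x. P x = 0}"
      and "fixQ = {x. Q x = x}" and "kerQ = {x. Q x = 0}"
  note sets = fixP_def kerP_def fixQ_def kerQ_def
  have subspaces: "subspace fixP" "subspace kerP" "subspace fixQ" "subspace kerQ"
    unfolding sets using P Q by (simp_all add: subspace_fixpoints real_vector.linear_subspace_kernel)
  have "fixP \<union> kerP = fixQ \<union> kerQ"
    unfolding sets using same_eigenvectors by blast
  then have "fixP \<subseteq> fixQ \<union> kerQ" "kerP \<subseteq> fixQ \<union> kerQ"
    "fixQ \<subseteq> fixP \<union> kerP" "kerQ \<subseteq> fixP \<union> kerP"
    by blast+
  then have "fixP \<subseteq> fixQ \<or> fixP \<subseteq> kerQ" "kerP \<subseteq> fixQ \<or> kerP \<subseteq> kerQ"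
    "fixQ \<subseteq> fixP \<or> fixQ \<subseteq> kerP" "kerQ \<subseteq> fixP \<or> kerQ \<subseteq> kerP"
    using subspaces by (simp_all add: subspace_subset_Un_cases)
  moreover have "fixP \<inter> kerP \<subseteq> {0}" "fixQ \<inter> kerQ \<subseteq> {0}" "0 \<in> kerP" "0 \<in> kerQ"
    unfolding sets using P Q by (auto simp: linear_0)
  \<comment> \<open>If both of P's subspaces lie in the same one of Q's, Q's other subspace meets it
    only in 0 and is therefore {0}.\<close>
  ultimately consider "fixP \<subseteq> fixQ" "kerP \<subseteq> kerQ" | "fixQ \<subseteq> fixP" "kerQ \<subseteq> kerP"
    | "fixP \<subseteq> kerQ" "kerP \<subseteq> fixQ" | "fixQ \<subseteq> kerP" "kerQ \<subseteq> fixP"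
    by blast
  then show ?thesis
  proof cases
    case 1
    have "P = Q"
      by (rule idempotent_eqI[of P Q, OF P(1) Q(1) P(2)])
        (use 1 in \<open>auto simp: sets\<close>)
    then show ?thesis ..
  next
    case 2
    have "Q = P"
      by (rule idempotent_eqI[of Q P, OF Q(1) P(1) Q(2)])
        (use 2 in \<open>auto simp: sets\<close>)
    then show ?thesis by simp
  next
    case 3
    have "linear (\<lambda>x. x - Q x)"
      using Q(1) by (simp add: linear_compose_sub linear_id[unfolded id_def])
    then have "P = (\<lambda>x. x - Q x)"
      by (rule idempotent_eqI[of P, OF P(1) _ P(2)])
        (use 3 in \<open>auto simp: sets\<close>)
    then show ?thesis ..
  next
    case 4
    have "linear (\<lambda>x. x - P x)"
      using P(1) by (simp add: linear_compose_sub linear_id[unfolded id_def])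
    then have "Q = (\<lambda>x. x - P x)"
      by (rule idempotent_eqI[of Q, OF Q(1) _ Q(2)])
        (use 4 in \<open>auto simp: sets\<close>)
    then show ?thesis by auto
  qed
qed

lemma is_projection_linear: "is_projection R \<Longrightarrow> linear R"
  by (simp add: is_projection_def bounded_linear.linear)

lemma is_projection_idem: "is_projection R \<Longrightarrow> R (R x) = R x"
  by (simp add: is_projection_def fun_eq_iff)

lemma is_projection_self_adjoint: "is_projection R \<Longrightarrow> inner (R x) y = inner x (R y)"
  by (simp add: is_projection_def)

lemma is_projection_complement:
  assumes "is_projection R"
  shows "is_projection (\<lambda>x. x - R x)"
  unfolding is_projection_def
proof (intro conjI allI)
  show "bounded_linear (\<lambda>x. x - R x)"
    using assms by (simp add: is_projection_def bounded_linear_sub)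
  show "(\<lambda>x. x - R x) \<circ> (\<lambda>x. x - R x) = (\<lambda>x. x - R x)"
    using is_projection_linear[OF assms] is_projection_idem[OF assms]
    by (simp add: fun_eq_iff linear_diff)
  show "inner (x - R x) y = inner x (y - R y)" for x y
    using is_projection_self_adjoint[OF assms] by (simp add: inner_diff)
qed

lemma is_projection_add:
  assumes F: "is_projection F" and G: "is_projection G" and FG: "\<And>x. F (G x) = 0"
  shows "is_projection (\<lambda>x. F x + G x)"
proof -
  have GF: "G (F x) = 0" for x
  proof -
    have "inner (G (F x)) y = 0" for y
      using FG by (simp add: is_projection_self_adjoint[OF G] is_projection_self_adjoint[OF F])
    then show ?thesis
      by (metis inner_eq_zero_iff)
  qed
  show ?thesis
    unfolding is_projection_def
  proof (intro conjI allI)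
    show "bounded_linear (\<lambda>x. F x + G x)"
      using F G by (simp add: is_projection_def bounded_linear_add)
    show "(\<lambda>x. F x + G x) \<circ> (\<lambda>x. F x + G x) = (\<lambda>x. F x + G x)"
      using FG GF is_projection_idem[OF F] is_projection_idem[OF G]
        is_projection_linear[OF F] is_projection_linear[OF G]
      by (simp add: fun_eq_iff linear_add)
    show "inner (F x + G x) y = inner x (F y + G y)" for x y
      by (simp add: inner_add is_projection_self_adjoint[OF F] is_projection_self_adjoint[OF G])
  qed
qed

lemma commute_complement_iff:
  assumes "linear P" "linear F"
  shows "(\<lambda>x. x - F x) \<circ> P = P \<circ> (\<lambda>x. x - F x) \<longleftrightarrow> F \<circ> P = P \<circ> F"
  using assms by (auto simp: fun_eq_iff linear_diff)

lemma idempotent_eigenvector_cases: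
  assumes "linear P" "\<And>x. P (P x) = P x" "P x = a *\<^sub>R x"
  shows "P x = x \<or> P x = 0"
proof -
  have "(a * a) *\<^sub>R x = a *\<^sub>R x"
    using assms by (metis linear_scale scaleR_scaleR)
  then have "a = 0 \<or> a = 1 \<or> x = 0"
    by (metis mult_cancel_left1 scaleR_cancel_right)
  then show ?thesis
    using assms by (auto simp: linear_0)
qed

(* For v = 0 this is the zero map (x / 0 = 0), so no lemma below needs v \<noteq> 0. *)
definition line_proj :: "'a::real_inner \<Rightarrow> 'a \<Rightarrow> 'a" where
  "line_proj v x = (inner x v / inner v v) *\<^sub>R v"

lemma line_proj_self [simp]: "line_proj v v = v"
  by (simp add: line_proj_def)

lemma line_proj_orthogonal: "inner u v = 0 \<Longrightarrow> line_proj v (line_proj u x) = 0"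
  by (simp add: line_proj_def)

lemma is_projection_line_proj: "is_projection (line_proj v)"
  unfolding is_projection_def
proof (intro conjI allI)
  show "bounded_linear (line_proj v)"
    unfolding line_proj_def
    by (intro bounded_linear_scaleR_const bounded_linear_compose[OF bounded_linear_divide]
        bounded_linear_inner_left)
  show "line_proj v \<circ> line_proj v = line_proj v"
    by (simp add: fun_eq_iff line_proj_def)
  show "inner (line_proj v x) y = inner x (line_proj v y)" for x y
    by (simp add: line_proj_def inner_commute)
qed

lemma finite_corank_line_proj_complement: "finite_corank (\<lambda>x. x - line_proj v x)"
  unfolding finite_corank_def finite_rank_def
  by (rule exI[of _ "{v}"]) (auto simp: line_proj_def span_base span_scale)

lemma line_proj_commute:
  assumes "is_projection P" "P v = v \<or> P v = 0"
  shows "P (line_proj v x) = line_proj v (P x)"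
proof -
  have "inner (P x) v = inner x (P v)"
    using assms(1) by (rule is_projection_self_adjoint)
  then show ?thesis
    using assms by (auto simp: line_proj_def linear_scale is_projection_linear)
qed

lemma line_proj_commute_iff:
  assumes "is_projection P"
  shows "line_proj v \<circ> P = P \<circ> line_proj v \<longleftrightarrow> P v = v \<or> P v = 0"
proof
  assume "line_proj v \<circ> P = P \<circ> line_proj v"
  then have "P v = line_proj v (P v)"
    by (metis comp_apply line_proj_self)
  then show "P v = v \<or> P v = 0"
    unfolding line_proj_def
    by (rule idempotent_eigenvector_cases[of P v,
          OF is_projection_linear[OF assms] is_projection_idem[OF assms]])
next
  assume "P v = v \<or> P v = 0"
  then show "line_proj v \<circ> P = P \<circ> line_proj v"
    using assms by (simp add: fun_eq_iff line_proj_commute)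
qed

lemma complex_structure_linear: "complex_structure J \<Longrightarrow> linear J"
  by (simp add: complex_structure_def bounded_linear.linear)

lemma complex_structure_inner_left:
  assumes "complex_structure J"
  shows "inner (J x) y = - inner x (J y)"
proof -
  have JJ: "J (J x) = - x" and JJ_inner: "inner (J (J x)) (J y) = inner (J x) y"
    using assms unfolding complex_structure_def by blast+
  have "inner (J x) y = inner (J (J x)) (J y)"
    by (rule JJ_inner[symmetric])
  also have "\<dots> = - inner x (J y)"
    by (simp add: JJ)
  finally show ?thesis .
qed

lemma complex_structure_orthogonal: "complex_structure J \<Longrightarrow> inner (J x) x = 0"
  using complex_structure_inner_left[of J x x] by (simp add: inner_commute)

lemma is_cprojection_iff: "is_cprojection J R \<longleftrightarrow> is_projection R \<and> (\<forall>x. R (J x) = J (R x))"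
proof
  assume R: "is_cprojection J R"
  have "cscale J \<i> x = J x" for x
    by (simp add: cscale_def)
  with R show "is_projection R \<and> (\<forall>x. R (J x) = J (R x))"
    unfolding is_cprojection_def is_projection_def cinner_def by (metis complex.inject)
next
  assume R: "is_projection R \<and> (\<forall>x. R (J x) = J (R x))"
  then have "linear R"
    by (simp add: is_projection_linear)
  with R show "is_cprojection J R"
    by (auto simp: is_cprojection_def is_projection_def cscale_def cinner_def linear_add linear_scale)
qed

lemma is_cprojection_complement:
  assumes "linear J" "is_cprojection J R"
  shows "is_cprojection J (\<lambda>x. x - R x)"
  using assms by (auto simp: is_cprojection_iff is_projection_complement linear_diff)

(* v and J v are orthogonal and of equal length, and span the complex line through v. *)
definition cline_proj :: "('a::real_inner \<Rightarrow> 'a) \<Rightarrow> 'a \<Rightarrow> 'a \<Rightarrow> 'a" where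
  "cline_proj J v x = line_proj v x + line_proj (J v) x"

lemma cline_proj_self:
  assumes "complex_structure J"
  shows "cline_proj J v v = v"
  using complex_structure_orthogonal[OF assms, of v]
  by (simp add: cline_proj_def line_proj_def inner_commute)

lemma is_cprojection_cline_proj:
  assumes J: "complex_structure J"
  shows "is_cprojection J (cline_proj J v)"
  unfolding is_cprojection_iff
proof
  show "is_projection (cline_proj J v)"
    unfolding cline_proj_def[abs_def]
    using complex_structure_orthogonal[OF J]
    by (intro is_projection_add is_projection_line_proj line_proj_orthogonal)
  have "J (J v) = - v" "inner (J x) (J v) = inner x v" for x
    using J by (simp_all add: complex_structure_def)
  then show "\<forall>x. cline_proj J v (J x) = J (cline_proj J v x)"
    using complex_structure_linear[OF J]
    by (simp add: cline_proj_def line_proj_def complex_structure_inner_left[OF J]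
        linear_add linear_scale)
qed

lemma cfinite_corank_cline_proj_complement: "cfinite_corank J (\<lambda>x. x - cline_proj J v x)"
  unfolding cfinite_corank_def cfinite_rank_def
proof (intro exI conjI)
  have "cline_proj J v x =
      cscale J (Complex (inner x v / inner v v) (inner x (J v) / inner (J v) (J v))) v" for x
    by (simp add: cline_proj_def line_proj_def cscale_def)
  then show "range (\<lambda>x. x - (x - cline_proj J v x)) \<subseteq> cspan J {v}"
    unfolding cspan_def by (force intro: exI[of _ "{v}"])
qed simp

lemma cline_proj_commute_iff:
  assumes J: "complex_structure J" and P: "is_cprojection J P"
  shows "cline_proj J v \<circ> P = P \<circ> cline_proj J v \<longleftrightarrow> P v = v \<or> P v = 0"
proof -
  have proj: "is_projection P" and PJ: "\<And>x. P (J x) = J (P x)"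
    using P by (simp_all add: is_cprojection_iff)
  show ?thesis
  proof
    assume "cline_proj J v \<circ> P = P \<circ> cline_proj J v"
    then have "P v = cline_proj J v (P v)"
      by (metis comp_apply cline_proj_self[OF J])
    moreover have "inner (P v) (J v) = 0"
      using is_projection_self_adjoint[OF proj, of v "J v"] PJ[of v]
        complex_structure_inner_left[OF J, of "P v" v]
      by (simp add: inner_commute)
    ultimately have "P v = line_proj v (P v)"
      by (simp add: cline_proj_def line_proj_def)
    then show "P v = v \<or> P v = 0"
      unfolding line_proj_def
      by (rule idempotent_eigenvector_cases[of P v,
            OF is_projection_linear[OF proj] is_projection_idem[OF proj]])
  next
    assume "P v = v \<or> P v = 0"
    moreover have "J 0 = 0"
      using complex_structure_linear[OF J] by (rule linear_0)
    ultimately have "P (J v) = J v \<or> P (J v) = 0"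
      using PJ by auto
    with \<open>P v = v \<or> P v = 0\<close> show "cline_proj J v \<circ> P = P \<circ> cline_proj J v"
      using is_projection_linear[OF proj]
      by (simp add: fun_eq_iff cline_proj_def linear_add line_proj_commute[OF proj])
  qed
qed

lemma projection_eq_or_complement:
  fixes P Q :: "'a::real_inner \<Rightarrow> 'a"
  assumes P: "is_projection P" and Q: "is_projection Q"
    and commutes: "\<forall>R. is_projection R \<and> finite_corank R \<longrightarrow> (R \<circ> P = P \<circ> R \<longleftrightarrow> R \<circ> Q = Q \<circ> R)"
  shows "P = Q \<or> P = (\<lambda>x. x - Q x)"
proof (rule idempotents_eq_or_complement)
  fix v :: 'a
  let ?R = "\<lambda>x. x - line_proj v x"
  have "?R \<circ> P = P \<circ> ?R \<longleftrightarrow> ?R \<circ> Q = Q \<circ> ?R"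
    using commutes is_projection_complement[OF is_projection_line_proj]
      finite_corank_line_proj_complement by blast
  then show "(P v = v \<or> P v = 0) \<longleftrightarrow> (Q v = v \<or> Q v = 0)"
    using P Q is_projection_line_proj[of v]
    by (simp add: commute_complement_iff is_projection_linear line_proj_commute_iff)
qed (use P Q in \<open>simp_all add: is_projection_linear is_projection_idem\<close>)

lemma cprojection_eq_or_complement:
  fixes P Q :: "'a::real_inner \<Rightarrow> 'a"
  assumes J: "complex_structure J" and P: "is_cprojection J P" and Q: "is_cprojection J Q"
    and commutes: "\<forall>R. is_cprojection J R \<and> cfinite_corank J R \<longrightarrow> (R \<circ> P = P \<circ> R \<longleftrightarrow> R \<circ> Q = Q \<circ> R)"
  shows "P = Q \<or> P = (\<lambda>x. x - Q x)"
proof (rule idempotents_eq_or_complement)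
  fix v :: 'a
  let ?R = "\<lambda>x. x - cline_proj J v x"
  have "?R \<circ> P = P \<circ> ?R \<longleftrightarrow> ?R \<circ> Q = Q \<circ> ?R"
    using commutes cfinite_corank_cline_proj_complement
      is_cprojection_complement[OF complex_structure_linear[OF J] is_cprojection_cline_proj[OF J]]
    by blast
  then show "(P v = v \<or> P v = 0) \<longleftrightarrow> (Q v = v \<or> Q v = 0)"
    using P Q is_cprojection_cline_proj[OF J, of v]
    by (simp add: commute_complement_iff is_cprojection_iff is_projection_linear
        cline_proj_commute_iff[OF J])
qed (use P Q in \<open>simp_all add: is_cprojection_iff is_projection_linear is_projection_idem\<close>)

theorem lemma5:
  fixes P Q :: "'a::{real_inner, complete_space} \<Rightarrow> 'a"
  shows
   "(infinite_dimensional TYPE('a) \<and> is_projection P \<and> is_projection Q \<and>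
      (\<forall>R. is_projection R \<and> finite_corank R \<longrightarrow> (R \<circ> P = P \<circ> R \<longleftrightarrow> R \<circ> Q = Q \<circ> R))
     \<longrightarrow> P = Q \<or> P = (\<lambda>x. x - Q x))
    \<and>
    (\<forall>J. complex_structure J \<and> cinfinite_dimensional J \<and>
       is_cprojection J P \<and> is_cprojection J Q \<and>
       (\<forall>R. is_cprojection J R \<and> cfinite_corank J R \<longrightarrow> (R \<circ> P = P \<circ> R \<longleftrightarrow> R \<circ> Q = Q \<circ> R))
     \<longrightarrow> P = Q \<or> P = (\<lambda>x. x - Q x))"
  using projection_eq_or_complement[of P Q] cprojection_eq_or_complement[of _ P Q] by blast

end
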